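(* In the pBeeGees protocol (setting described in the context), for every view $v$, at most one block of view $v$ can collect a quorum certificate (of any of the four vote types).
   Context: Setting (pBeeGees). There are $n=3f+1$ processes, at most $f$ of which are Byzantine (they may deviate arbitrarily but cannot forge signatures or message digests); the others are correct. The protocol proceeds in views $v=1,2,\dots$, each with a designated leader $l_v$. Blocks carry a view number $B.v$, a parent block, and a quorum certificate. A vote for a block $B$ is cast in view $B.v$ and has one of four types: normal, prud, eqvc, or (prud,eqvc). A quorum certificate (QC) for a block $B$ consists of $n-f$ votes of the same type for $B$ from distinct processes; a block "collects" a QC if such a QC for it exists. A correct process votes at most once per view. *)

theory Defs
  imports Main
begin

datatype vote_type = Normal | Prud | Eqvc | PrudEqvc

text \<open>Processes form a finite type 'p (n = card UNIV).  The predicate voted p B t means that process p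
  cast a vote of type t for block B (such a vote is cast in view B.v).\<close>
definition collects_QC ::
  "nat \<Rightarrow> ('p::finite \<Rightarrow> 'b \<Rightarrow> vote_type \<Rightarrow> bool) \<Rightarrow> 'b \<Rightarrow> bool" where
  "collects_QC f voted B \<longleftrightarrow>
     (\<exists>t Q. card Q = card (UNIV :: 'p set) - f \<and> (\<forall>p\<in>Q. voted p B t))"

definition votes_once_per_view ::
  "('b \<Rightarrow> nat) \<Rightarrow> ('p \<Rightarrow> 'b \<Rightarrow> vote_type \<Rightarrow> bool) \<Rightarrow> 'p \<Rightarrow> bool" where
  "votes_once_per_view view voted p \<longleftrightarrow>
     (\<forall>B B' t t'. voted p B t \<and> voted p B' t' \<and> view B = view B' \<longrightarrow> B = B' \<and> t = t')"

end

theory Submission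
  imports Defs
begin

text \<open>Two quorums of n - f = 2f + 1 processes each intersect in at least f + 1 processes,
  hence in a correct one; a correct process votes for at most one block per view.\<close>

lemma quorums_intersect_outside:
  fixes Q1 Q2 F :: "'a::finite set"
  assumes "card (UNIV :: 'a set) + card F < card Q1 + card Q2"
  shows "\<exists>p \<in> Q1 \<inter> Q2. p \<notin> F"
proof (rule ccontr)
  assume "\<not> ?thesis"
  then have "card (Q1 \<inter> Q2) \<le> card F"
    by (intro card_mono) auto
  moreover have "card (Q1 \<union> Q2) \<le> card (UNIV :: 'a set)"
    by (rule card_mono) auto
  moreover have "card (Q1 \<union> Q2) + card (Q1 \<inter> Q2) = card Q1 + card Q2"
    using card_Un_Int[of Q1 Q2] by simp
  ultimately show False
    using assms by linarith
qed

theorem lemma1: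
  fixes f :: nat
    and view :: "'b \<Rightarrow> nat"
    and voted :: "'p::finite \<Rightarrow> 'b \<Rightarrow> vote_type \<Rightarrow> bool"
    and Byz :: "'p set"
    and B1 B2 :: 'b
    and v :: nat
  assumes "card (UNIV :: 'p set) = 3 * f + 1"
    and "card Byz \<le> f"
    and "\<forall>p. p \<notin> Byz \<longrightarrow> votes_once_per_view view voted p"
    and "view B1 = v" and "view B2 = v"
    and "collects_QC f voted B1" and "collects_QC f voted B2"
  shows "B1 = B2"
proof -
  obtain t1 Q1 where Q1: "card Q1 = card (UNIV :: 'p set) - f" "\<forall>p\<in>Q1. voted p B1 t1"
    using \<open>collects_QC f voted B1\<close> unfolding collects_QC_def by blast
  obtain t2 Q2 where Q2: "card Q2 = card (UNIV :: 'p set) - f" "\<forall>p\<in>Q2. voted p B2 t2"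
    using \<open>collects_QC f voted B2\<close> unfolding collects_QC_def by blast
  have "card (UNIV :: 'p set) + card Byz < card Q1 + card Q2"
    using Q1(1) Q2(1) assms(1,2) by simp
  then obtain p where p: "p \<in> Q1" "p \<in> Q2" "p \<notin> Byz"
    using quorums_intersect_outside by blast
  then have "votes_once_per_view view voted p"
    using assms(3) by blast
  then show ?thesis
    using p Q1(2) Q2(2) assms(4,5) unfolding votes_once_per_view_def by metis
qed

end
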